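(* Let $\|\cdot\|$ be a norm on $\mathbb{R}^d$ and let $Q$ be a collection of finite subsets of $\mathbb{R}^d$, each with at least $2$ elements. Let $E_0=\{e\subseteq\mathbb{R}^d\mid e \text{ is congruent to some } f\in Q\}$. For each $t\in\mathbb{Z}^+$ let $B_t=\{f\cup T\mid f\in Q,\ T\subseteq\mathbb{R}^d,\ f\cap T=\emptyset,\ |T|=t\}$ and $E_t=\{e\subseteq\mathbb{R}^d\mid e \text{ is congruent to some } g\in B_t\}$. Let $\mathcal{H}_0=(\mathbb{R}^d,E_0)$ and $\mathcal{H}_t=(\mathbb{R}^d,E_t)$. If $\chi(\mathcal{H}_0)<\infty$, then $\chi(\mathcal{H}_t)=\chi(\mathcal{H}_0)$ for every $t\in\mathbb{Z}^+$.
   Context: Congruence is in $(\mathbb{R}^d,\|\cdot\|)$: two sets are congruent iff one is the image of the other under a composition, in either order, of a surjective linear isometry of $(\mathbb{R}^d,\|\cdot\|)$ and a translation. A hypergraph $(V,E)$ has edges that are subsets of $V$ of size at least $2$; a proper coloring makes no edge monochromatic; $\chi$ is the least number of colors of a proper coloring. $\mathbb{Z}^+$ denotes the positive integers. *)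

theory Defs
  imports "HOL-Analysis.Analysis" "HOL-Library.Extended_Nat"
begin

definition is_norm :: "('a::real_vector \<Rightarrow> real) \<Rightarrow> bool" where
  "is_norm N \<longleftrightarrow> (\<forall>x. N x \<ge> 0) \<and> (\<forall>x. N x = 0 \<longleftrightarrow> x = 0) \<and>
     (\<forall>c x. N (c *\<^sub>R x) = \<bar>c\<bar> * N x) \<and> (\<forall>x y. N (x + y) \<le> N x + N y)"

definition lin_isometry :: "('a::real_vector \<Rightarrow> real) \<Rightarrow> ('a \<Rightarrow> 'a) \<Rightarrow> bool" where
  "lin_isometry N L \<longleftrightarrow> linear L \<and> surj L \<and> (\<forall>x. N (L x) = N x)"

definition congruent_N :: "('a::real_vector \<Rightarrow> real) \<Rightarrow> 'a set \<Rightarrow> 'a set \<Rightarrow> bool" where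
  "congruent_N N A B \<longleftrightarrow> (\<exists>L a. lin_isometry N L \<and>
      (A = (\<lambda>x. L x + a) ` B \<or> A = (\<lambda>x. L (x + a)) ` B))"

definition proper_coloring :: "'a set \<Rightarrow> 'a set set \<Rightarrow> nat \<Rightarrow> ('a \<Rightarrow> nat) \<Rightarrow> bool" where
  "proper_coloring V E k c \<longleftrightarrow> c ` V \<subseteq> {..<k} \<and>
      (\<forall>e\<in>E. \<not> (\<exists>col. \<forall>x\<in>e. c x = col))"

text \<open>Chromatic number, with value \<infinity> if no finite proper colouring exists.\<close>
definition chromatic_number :: "'a set \<Rightarrow> 'a set set \<Rightarrow> enat" where
  "chromatic_number V E = Inf {enat k | k. \<exists>c. proper_coloring V E k c}"

end

theory Submission
  imports Defs
begin

text \<open>Adding points to the edges can only make proper colourings easier, so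
  \<open>\<chi>(\<H>\<^sub>t) \<le> \<chi>(\<H>\<^sub>0)\<close>. Conversely, take a proper colouring \<open>c\<close> of
  \<open>\<H>\<^sub>t\<close> with \<open>k\<close> colours. A monochromatic copy of some \<open>f \<in> Q\<close> inside an
  infinite colour class can be completed by \<open>t\<close> further points of that class to a
  monochromatic edge of \<open>\<H>\<^sub>t\<close>; hence every \<open>\<H>\<^sub>0\<close>-edge that is
  monochromatic under \<open>c\<close> meets the union \<open>F\<close> of the finite colour classes, a finite
  set. Translating \<open>c\<close> by \<open>n v\<close> for a fixed \<open>v \<noteq> 0\<close> pushes \<open>F\<close> off every
  given finite set for large \<open>n\<close>. By compactness of the space of all
  \<open>k\<close>-colourings (Tychonoff), these translates have a cluster point, and it is a
  proper colouring of \<open>\<H>\<^sub>0\<close>.\<close>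

definition extensions :: "'a set set \<Rightarrow> nat \<Rightarrow> 'a set set" where
  "extensions Q t = {f \<union> T | f T. f \<in> Q \<and> f \<inter> T = {} \<and> finite T \<and> card T = t}"

definition congruent_copies :: "('a::real_vector \<Rightarrow> real) \<Rightarrow> 'a set set \<Rightarrow> 'a set set" where
  "congruent_copies N Q = {e. \<exists>f\<in>Q. congruent_N N e f}"

lemma congruent_N_iff_affine_image:
  "congruent_N N A B \<longleftrightarrow> (\<exists>L b. lin_isometry N L \<and> A = (\<lambda>x. L x + b) ` B)"
proof
  assume "congruent_N N A B"
  then obtain L a where L: "lin_isometry N L"
    and A: "A = (\<lambda>x. L x + a) ` B \<or> A = (\<lambda>x. L (x + a)) ` B"
    unfolding congruent_N_def by blast
  have "L (x + a) = L x + L a" for x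
    using L linear_add unfolding lin_isometry_def by blast
  then show "\<exists>L b. lin_isometry N L \<and> A = (\<lambda>x. L x + b) ` B"
    using L A by auto
qed (auto simp: congruent_N_def)

lemma congruent_N_translate:
  assumes "congruent_N N A B"
  shows "congruent_N N ((\<lambda>x. x + v) ` A) B"
proof -
  obtain L b where L: "lin_isometry N L" and A: "A = (\<lambda>x. L x + b) ` B"
    using assms congruent_N_iff_affine_image by blast
  have "(\<lambda>x. x + v) ` A = (\<lambda>x. L x + (b + v)) ` B"
    unfolding A image_image by (simp add: add.assoc)
  then show ?thesis
    using L unfolding congruent_N_iff_affine_image by blast
qed

lemma bij_lin_isometry_translate:
  fixes L :: "'a::euclidean_space \<Rightarrow> 'a"
  assumes "lin_isometry N L"
  shows "bij (\<lambda>x. L x + b)"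
proof -
  have "linear L" "surj L"
    using assms unfolding lin_isometry_def by auto
  then have "bij L"
    by (simp add: bij_def linear_surjective_imp_injective)
  then show ?thesis
    using bij_comp[OF _ bij_plus_right[of b]] by (simp add: comp_def)
qed

lemma proper_coloring_superedges:
  assumes "proper_coloring V E k c" and "\<forall>e'\<in>E'. \<exists>e\<in>E. e \<subseteq> e'"
  shows "proper_coloring V E' k c"
  using assms unfolding proper_coloring_def by (meson subsetD)

lemma proper_coloring_extensions:
  assumes "proper_coloring V (congruent_copies N Q) k c"
  shows "proper_coloring V (congruent_copies N (extensions Q t)) k c"
proof (rule proper_coloring_superedges[OF assms], intro ballI)
  fix e assume "e \<in> congruent_copies N (extensions Q t)"
  then obtain f T L b where "f \<in> Q" "lin_isometry N L" "e = (\<lambda>x. L x + b) ` (f \<union> T)"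
    unfolding congruent_copies_def extensions_def congruent_N_iff_affine_image by blast
  then show "\<exists>e'\<in>congruent_copies N Q. e' \<subseteq> e"
    unfolding congruent_copies_def congruent_N_iff_affine_image
    by (intro bexI[of _ "(\<lambda>x. L x + b) ` f"]) auto
qed

lemma bij_exists_disjoint_preimage_subset:
  assumes "bij \<phi>" and "finite f" and "infinite C"
  shows "\<exists>T. f \<inter> T = {} \<and> finite T \<and> card T = t \<and> \<phi> ` T \<subseteq> C"
proof -
  have "infinite (C - \<phi> ` f)"
    using assms by (simp add: Diff_infinite_finite)
  then obtain T' where T': "finite T'" "card T' = t" "T' \<subseteq> C - \<phi> ` f"
    using infinite_arbitrarily_large by blast
  have "inj \<phi>" "surj \<phi>"
    using \<open>bij \<phi>\<close> by (auto dest: bij_is_inj bij_is_surj)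
  then show ?thesis
    using T' by (intro exI[of _ "\<phi> -` T'"])
      (auto simp: card_vimage_inj finite_vimageI surj_image_vimage_eq)
qed

lemma monochromatic_copy_in_finite_colour_class:
  fixes N :: "'a::euclidean_space \<Rightarrow> real"
  assumes proper: "proper_coloring V (congruent_copies N (extensions Q t)) k c"
    and "f \<in> Q" "finite f" "congruent_N N e f"
    and mono: "\<forall>x\<in>e. c x = col"
  shows "finite {y. c y = col}"
proof (rule ccontr)
  assume infinite: "infinite {y. c y = col}"
  obtain L b where L: "lin_isometry N L" and e: "e = (\<lambda>x. L x + b) ` f"
    using \<open>congruent_N N e f\<close> congruent_N_iff_affine_image by blast
  obtain T where T: "f \<inter> T = {}" "finite T" "card T = t"
    and mono_T: "(\<lambda>x. L x + b) ` T \<subseteq> {y. c y = col}"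
    using bij_exists_disjoint_preimage_subset[OF bij_lin_isometry_translate[OF L]
        \<open>finite f\<close> infinite] by blast
  have "(\<lambda>x. L x + b) ` (f \<union> T) \<in> congruent_copies N (extensions Q t)"
    unfolding congruent_copies_def extensions_def congruent_N_iff_affine_image
    using L T \<open>f \<in> Q\<close> by blast
  moreover have "\<forall>x\<in>(\<lambda>x. L x + b) ` (f \<union> T). c x = col"
    using mono mono_T e by auto
  ultimately show False
    using proper unfolding proper_coloring_def by blast
qed

lemma finite_points_of_finite_fibres:
  assumes "finite (range c)"
  shows "finite {x. finite {y. c y = c x}}"
proof (rule finite_subset)
  show "{x. finite {y. c y = c x}} \<subseteq> (\<Union>j\<in>{j \<in> range c. finite {y. c y = j}}. {y. c y = j})"
    by auto
qed (use assms in auto)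

lemma eventually_translates_avoid_finite:
  fixes v :: "'a::real_vector"
  assumes "finite F" "finite e" "v \<noteq> 0"
  shows "\<forall>\<^sub>F n in sequentially. \<forall>x\<in>e. x + real n *\<^sub>R v \<notin> F"
proof -
  have "inj (\<lambda>n::nat. x + real n *\<^sub>R v)" for x
    using \<open>v \<noteq> 0\<close> by (auto simp: inj_def)
  then have "finite (\<Union>x\<in>e. (\<lambda>n. x + real n *\<^sub>R v) -` F)"
    using assms by (blast intro: finite_vimageI)
  then have "\<forall>\<^sub>F n in cofinite. \<forall>x\<in>e. x + real n *\<^sub>R v \<notin> F"
    unfolding eventually_cofinite by (rule finite_subset[rotated]) auto
  then show ?thesis
    by (simp add: cofinite_eq_sequentially)
qed

lemma colouring_sequence_cluster_point:
  fixes s :: "nat \<Rightarrow> 'a \<Rightarrow> nat"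
  assumes s_less: "\<And>n x. s n x < k"
  obtains g where "\<And>x. g x < k"
    and "\<And>e. finite e \<Longrightarrow> \<exists>\<^sub>F n in sequentially. \<forall>x\<in>e. g x = s n x"
proof -
  define X where "X = product_topology (\<lambda>_::'a. discrete_topology {..<k}) UNIV"
  have topspace: "topspace X = {h. \<forall>x. h x < k}"
    unfolding X_def by (auto simp: PiE_def extensional_def)
  define C where "C n = X closure_of (s ` {n..})" for n
  have "(\<Inter>n. C n) \<noteq> {}"
  proof (rule compact_space_imp_nest)
    show "compact_space X"
      unfolding X_def
      by (simp add: compact_space_product_topology compact_space_discrete_topology)
    show "closedin X (C n)" for n
      unfolding C_def by simp
    show "C n \<noteq> {}" for n
    proof -
      have "s n \<in> topspace X \<inter> s ` {n..}"
        using s_less topspace by auto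
      then show ?thesis
        unfolding C_def by (metis closure_of_subset_Int empty_iff subsetD)
    qed
    show "decseq C"
      unfolding decseq_def C_def by (intro allI impI closure_of_mono) auto
  qed
  then obtain g where g: "\<And>n. g \<in> C n"
    by blast
  have "g \<in> topspace X"
    using g[of 0] unfolding C_def in_closure_of by blast
  then have g_less: "g x < k" for x
    using topspace by simp
  have "\<exists>n\<ge>m. \<forall>x\<in>e. g x = s n x" if "finite e" for e m
  proof -
    define U where "U = PiE UNIV (\<lambda>x. if x \<in> e then {g x} else {..<k})"
    have "openin X U"
      unfolding X_def U_def openin_PiE_gen
      using \<open>finite e\<close> g_less by (auto intro: finite_subset[OF _ \<open>finite e\<close>] split: if_splits)
    moreover have "g \<in> U"
      unfolding U_def using g_less by auto
    ultimately obtain n where "n \<ge> m" "s n \<in> U"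
      using g[of m] unfolding C_def in_closure_of by blast
    then show ?thesis
      unfolding U_def PiE_iff by (metis UNIV_I singletonD)
  qed
  with g_less show ?thesis
    using that unfolding frequently_sequentially by blast
qed

lemma proper_coloring_base_of_extensions:
  fixes N :: "'a::euclidean_space \<Rightarrow> real"
  assumes proper: "proper_coloring UNIV (congruent_copies N (extensions Q t)) k c"
    and Q: "\<forall>f\<in>Q. finite f \<and> f \<noteq> {}"
  shows "\<exists>c'. proper_coloring UNIV (congruent_copies N Q) k c'"
proof -
  have c_less: "c x < k" for x
    using proper unfolding proper_coloring_def by auto
  define F where "F = {x. finite {y. c y = c x}}"
  have "range c \<subseteq> {..<k}"
    using c_less by auto
  then have "finite F"
    unfolding F_def by (intro finite_points_of_finite_fibres) (simp add: finite_subset)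
  obtain v :: 'a where "v \<noteq> 0"
    using nonzero_Basis[OF SOME_Basis] by blast
  obtain g where g_less: "\<And>x. g x < k"
    and g_cluster: "\<And>e. finite e \<Longrightarrow> \<exists>\<^sub>F n in sequentially. \<forall>x\<in>e. g x = c (x + real n *\<^sub>R v)"
    using colouring_sequence_cluster_point[of "\<lambda>n x. c (x + real n *\<^sub>R v)" k, OF c_less]
    by blast
  have "proper_coloring UNIV (congruent_copies N Q) k g"
    unfolding proper_coloring_def
  proof (intro conjI ballI notI)
    show "g ` UNIV \<subseteq> {..<k}"
      using g_less by auto
    fix e assume "e \<in> congruent_copies N Q"
    then obtain f where f: "f \<in> Q" "finite f" "f \<noteq> {}" and e_f: "congruent_N N e f"
      using Q unfolding congruent_copies_def by blast
    then obtain L b where e: "e = (\<lambda>x. L x + b) ` f"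
      unfolding congruent_N_iff_affine_image by blast
    then have "finite e" "e \<noteq> {}"
      using f by simp_all
    assume "\<exists>col. \<forall>x\<in>e. g x = col"
    then obtain col where mono: "\<forall>x\<in>e. g x = col"
      by blast
    have "\<exists>\<^sub>F n in sequentially. (\<forall>x\<in>e. g x = c (x + real n *\<^sub>R v))
            \<and> (\<forall>x\<in>e. x + real n *\<^sub>R v \<notin> F)"
      by (rule frequently_eventually_frequently[OF g_cluster[OF \<open>finite e\<close>]
            eventually_translates_avoid_finite[OF \<open>finite F\<close> \<open>finite e\<close> \<open>v \<noteq> 0\<close>]])
    then obtain n where agree: "\<forall>x\<in>e. g x = c (x + real n *\<^sub>R v)"
      and avoid: "\<forall>x\<in>e. x + real n *\<^sub>R v \<notin> F"
      using frequently_ex by blast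
    define e' where "e' = (\<lambda>x. x + real n *\<^sub>R v) ` e"
    have "congruent_N N e' f"
      unfolding e'_def using e_f by (rule congruent_N_translate)
    moreover have "\<forall>y\<in>e'. c y = col"
      using mono agree unfolding e'_def by simp
    ultimately have "finite {y. c y = col}"
      using monochromatic_copy_in_finite_colour_class[OF proper f(1,2)] by blast
    moreover obtain x where "x \<in> e"
      using \<open>e \<noteq> {}\<close> by blast
    then have "infinite {y. c y = col}"
      using avoid agree mono unfolding F_def by simp
    ultimately show False
      by blast
  qed
  then show ?thesis
    by blast
qed

lemma chromatic_number_extensions:
  fixes N :: "'a::euclidean_space \<Rightarrow> real"
  assumes "\<forall>f\<in>Q. finite f \<and> f \<noteq> {}"
  shows "chromatic_number UNIV (congruent_copies N (extensions Q t))
           = chromatic_number UNIV (congruent_copies N Q)"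
proof -
  have "(\<exists>c. proper_coloring UNIV (congruent_copies N (extensions Q t)) k c)
        \<longleftrightarrow> (\<exists>c. proper_coloring UNIV (congruent_copies N Q) k c)" for k
    using proper_coloring_base_of_extensions[OF _ assms] proper_coloring_extensions by blast
  then show ?thesis
    unfolding chromatic_number_def by simp
qed

theorem theorem4p4:
  fixes N :: "real ^ 'd \<Rightarrow> real"
    and Q :: "(real ^ 'd) set set"
  assumes "is_norm N"
    and "\<forall>f\<in>Q. finite f \<and> card f \<ge> 2"
    and "chromatic_number UNIV {e. \<exists>f\<in>Q. congruent_N N e f} < \<infinity>"
  shows "\<forall>t::nat. t \<ge> 1 \<longrightarrow>
           chromatic_number UNIV
             {e. \<exists>g\<in>{f \<union> T | f T. f \<in> Q \<and> f \<inter> T = {} \<and> finite T \<and> card T = t}.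
                   congruent_N N e g}
           = chromatic_number UNIV {e. \<exists>f\<in>Q. congruent_N N e f}"
proof -
  have "\<forall>f\<in>Q. finite f \<and> f \<noteq> {}"
    using assms(2) by fastforce
  then show ?thesis
    using chromatic_number_extensions[where N = N]
    unfolding congruent_copies_def extensions_def by blast
qed

end
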